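(* Let $n \ge 1$, let $\mathcal{W}$ be a finite set (a vocabulary of words), and let $\phi : \mathcal{W} \to \mathbb{H}^n$ be a map (a word embedding) into the hyperboloid model of $n$-dimensional hyperbolic space with distance $d$. Fix $\varepsilon > 0$ such that $\int_{\mathbb{H}^n} \exp(-\varepsilon\, d(z, x))\, dz < \infty$ for $x \in \mathbb{H}^n$, where $dz$ is the Riemannian volume measure of $\mathbb{H}^n$. Define the randomized mechanism $M : \mathcal{W} \to \mathcal{W}$ as follows: on input $w$, sample $z \in \mathbb{H}^n$ from the probability density (with respect to $dz$) proportional to $\exp(-\varepsilon\, d(z, \phi(w)))$, and output $M(w) = \hat{w} = \mathop{argmin}_{u \in \mathcal{W}} d(\phi(u), z)$ (ties broken by a fixed deterministic rule). Then for all $w, w', \hat{w} \in \mathcal{W}$, $$\Pr[M(w) = \hat{w}] \le \exp\big(\varepsilon\, d(\phi(w), \phi(w'))\big)\, \Pr[M(w') = \hat{w}],$$ i.e. $M$ is $\varepsilon d_\chi$-private with respect to the hyperbolic distance between word embeddings.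
   Context: The Lorentzian inner product on $\mathbb{R}^{n+1}$ is $\langle u, v\rangle_{\mathcal{L}} = -u_0 v_0 + \sum_{i=1}^n u_i v_i$. The hyperboloid (Lorentz) model of hyperbolic space is $\mathbb{H}^n = \{u \in \mathbb{R}^{n+1} : \langle u, u\rangle_{\mathcal{L}} = -1,\ u_0 > 0\}$, with distance $d(u,v) = \operatorname{arcosh}(-\langle u, v\rangle_{\mathcal{L}})$. A randomized mechanism $M$ on a set equipped with a metric $d_\chi$ is called $\varepsilon d_\chi$-private if $\Pr[M(x) = y] \le e^{\varepsilon d_\chi(x,x')} \Pr[M(x') = y]$ for all inputs $x, x'$ and outputs $y$. *)

theory Defs
  imports "HOL-Analysis.Analysis" "HOL-Probability.Probability"
begin

text \<open>Points of R^(n+1) are pairs (u0, u) with u0 real and u in an n-dimensional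
  Euclidean space 'a (n = DIM('a) >= 1).\<close>

definition lorentz_inner :: "real \<times> 'a::euclidean_space \<Rightarrow> real \<times> 'a \<Rightarrow> real" where
  "lorentz_inner u v = - fst u * fst v + snd u \<bullet> snd v"

definition hyperboloid :: "(real \<times> 'a::euclidean_space) set" where
  "hyperboloid = {u. lorentz_inner u u = -1 \<and> fst u > 0}"

definition hyp_dist :: "real \<times> 'a::euclidean_space \<Rightarrow> real \<times> 'a \<Rightarrow> real" where
  "hyp_dist u v = arcosh (- lorentz_inner u v)"

definition hyp_lift :: "'a::euclidean_space \<Rightarrow> real \<times> 'a" where
  "hyp_lift x = (sqrt (1 + (norm x)\<^sup>2), x)"

text \<open>Riemannian volume measure of the hyperboloid (as a measure on R^(n+1), supported
  on the hyperboloid): in the chart above the induced metric is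
  g = I - x x^T / (1+|x|^2), with sqrt(det g) = 1 / sqrt(1+|x|^2).\<close>
definition hyp_volume :: "(real \<times> 'a::euclidean_space) measure" where
  "hyp_volume = distr (density lborel (\<lambda>x::'a. ennreal (1 / sqrt (1 + (norm x)\<^sup>2)))) borel hyp_lift"

definition hyp_laplace_norm :: "real \<Rightarrow> real \<times> 'a::euclidean_space \<Rightarrow> ennreal" where
  "hyp_laplace_norm eps x = (\<integral>\<^sup>+ z. ennreal (exp (- eps * hyp_dist z x)) \<partial>hyp_volume)"

definition hyp_laplace :: "real \<Rightarrow> real \<times> 'a::euclidean_space \<Rightarrow> (real \<times> 'a) measure" where
  "hyp_laplace eps x = density hyp_volume
     (\<lambda>z. ennreal (exp (- eps * hyp_dist z x)) / hyp_laplace_norm eps x)"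

definition nearest_word :: "'w::linorder set \<Rightarrow> ('w \<Rightarrow> real \<times> 'a::euclidean_space) \<Rightarrow> real \<times> 'a \<Rightarrow> 'w" where
  "nearest_word W \<phi> z = Min {u \<in> W. \<forall>v \<in> W. hyp_dist (\<phi> u) z \<le> hyp_dist (\<phi> v) z}"

definition mech_prob :: "real \<Rightarrow> 'w::linorder set \<Rightarrow> ('w \<Rightarrow> real \<times> 'a::euclidean_space) \<Rightarrow> 'w \<Rightarrow> 'w \<Rightarrow> real" where
  "mech_prob eps W \<phi> w w_hat =
     measure (hyp_laplace eps (\<phi> w)) {z \<in> space (hyp_laplace eps (\<phi> w)). nearest_word W \<phi> z = w_hat}"

end

theory Submission
  imports Defs
begin

text \<open>By the triangle inequality the density \<open>exp (-\<epsilon> d(z, x))\<close> changes at most by the factor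
  \<open>exp (\<epsilon> d(x, x'))\<close> when \<open>x\<close> is replaced by \<open>x'\<close>, so the point is that the normalising
  constants at \<open>x\<close> and \<open>x'\<close> agree. They do because the Lorentz boosts generate a group of motions
  acting transitively on the hyperboloid and preserving both the distance and the Riemannian
  volume. Volume preservation of a boost reduces by Fubini to a line parallel to its basis
  direction, where the substitution \<open>s = r sinh t\<close> turns the boost into a translation.
  Transitivity also reduces the triangle inequality to the case where the middle point is
  \<open>(1, 0)\<close>, where it follows from the addition formula for \<open>cosh\<close> and Cauchy-Schwarz.\<close>

section \<open>The hyperboloid and Lorentz boosts\<close>

lemma lorentz_inner_commute: "lorentz_inner u v = lorentz_inner v u"
  by (simp add: lorentz_inner_def inner_commute)

lemma lorentz_inner_origin: "lorentz_inner u (1, 0) = - fst u"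
  by (simp add: lorentz_inner_def)

lemma hyperboloid_iff: "u \<in> hyperboloid \<longleftrightarrow> fst u = sqrt (1 + (norm (snd u))\<^sup>2)"
proof -
  obtain t y where u: "u = (t, y)" by (cases u)
  have "lorentz_inner u u = - t\<^sup>2 + (norm y)\<^sup>2"
    by (simp add: u lorentz_inner_def power2_norm_eq_inner power2_eq_square[of t])
  then have "u \<in> hyperboloid \<longleftrightarrow> t\<^sup>2 = 1 + (norm y)\<^sup>2 \<and> t > 0"
    by (auto simp: hyperboloid_def u)
  also have "\<dots> \<longleftrightarrow> t = sqrt (1 + (norm y)\<^sup>2)"
    by (metis add_pos_nonneg real_sqrt_gt_zero real_sqrt_unique less_imp_le
        zero_le_power2 zero_less_one real_sqrt_pow2)
  finally show ?thesis by (simp add: u)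
qed

lemma hyp_lift_in_hyperboloid: "hyp_lift y \<in> hyperboloid"
  by (simp add: hyperboloid_iff hyp_lift_def)

lemma hyp_lift_snd: "u \<in> hyperboloid \<Longrightarrow> hyp_lift (snd u) = u"
  by (cases u) (simp add: hyperboloid_iff hyp_lift_def)

lemma hyperboloid_norm_snd_less_fst: "u \<in> hyperboloid \<Longrightarrow> norm (snd u) < fst u"
  by (simp add: hyperboloid_iff real_less_rsqrt)

lemma hyperboloid_fst_ge_1: "u \<in> hyperboloid \<Longrightarrow> fst u \<ge> 1"
  by (simp add: hyperboloid_iff)

text \<open>For \<open>b \<in> Basis\<close>, the hyperbolic rotation by \<open>a\<close> in the plane spanned by \<open>(1, 0)\<close> and
  \<open>(0, b)\<close>; it fixes the orthogonal complement of that plane.\<close>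

definition lorentz_boost :: "real \<Rightarrow> 'a::euclidean_space \<Rightarrow> real \<times> 'a \<Rightarrow> real \<times> 'a" where
  "lorentz_boost a b u = (cosh a * fst u + sinh a * (snd u \<bullet> b),
     snd u + (sinh a * fst u + cosh a * (snd u \<bullet> b) - snd u \<bullet> b) *\<^sub>R b)"

lemma inner_snd_lorentz_boost:
  assumes "b \<in> Basis" and "c \<in> Basis"
  shows "snd (lorentz_boost a b u) \<bullet> c =
    (if c = b then sinh a * fst u + cosh a * (snd u \<bullet> b) else snd u \<bullet> c)"
  using assms by (simp add: lorentz_boost_def inner_add_left inner_Basis)

lemma lorentz_inner_lorentz_boost:
  assumes "b \<in> Basis"
  shows "lorentz_inner (lorentz_boost a b u) (lorentz_boost a b v) = lorentz_inner u v"
proof -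
  have expand: "(y + d *\<^sub>R b) \<bullet> (y' + d' *\<^sub>R b) = y \<bullet> y' + d * (y' \<bullet> b) + d' * (y \<bullet> b) + d * d'"
    for y y' :: 'a and d d' :: real
  proof -
    have "b \<bullet> b = 1" "b \<bullet> y' = y' \<bullet> b" using assms by (simp_all add: inner_commute)
    then show ?thesis by (simp add: inner_add_left inner_add_right distrib_left)
  qed
  have "cosh a ^ 2 = sinh a ^ 2 + 1" by (rule cosh_square_eq)
  then show ?thesis
    unfolding lorentz_boost_def lorentz_inner_def fst_conv snd_conv expand
    by algebra
qed

lemma lorentz_boost_in_hyperboloid:
  assumes b: "b \<in> Basis" and u: "u \<in> hyperboloid"
  shows "lorentz_boost a b u \<in> hyperboloid"
proof -
  have "\<bar>snd u \<bullet> b\<bar> < fst u"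
    using hyperboloid_norm_snd_less_fst[OF u] Basis_le_norm[OF b, of "snd u"] by linarith
  moreover have "\<bar>sinh a\<bar> < cosh a"
    using sinh_less_cosh_real[of a] sinh_less_cosh_real[of "-a"] by (simp add: abs_less_iff)
  ultimately have "\<bar>sinh a * (snd u \<bullet> b)\<bar> < cosh a * fst u"
    by (simp add: abs_mult mult_strict_mono')
  then have "fst (lorentz_boost a b u) > 0"
    by (simp add: lorentz_boost_def)
  moreover have "lorentz_inner (lorentz_boost a b u) (lorentz_boost a b u) = -1"
    using u by (simp add: lorentz_inner_lorentz_boost[OF b] hyperboloid_def)
  ultimately show ?thesis by (simp add: hyperboloid_def)
qed

lemma lorentz_boost_clears_coordinate:
  assumes b: "b \<in> Basis" and u: "u \<in> hyperboloid"
  obtains a where "snd (lorentz_boost a b u) \<bullet> b = 0"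
proof -
  define t p where "t = fst u" and "p = snd u \<bullet> b"
  have "\<bar>p\<bar> < t"
    using hyperboloid_norm_snd_less_fst[OF u] Basis_le_norm[OF b, of "snd u"]
    unfolding t_def p_def by linarith
  then have "p\<^sup>2 < t\<^sup>2"
    using power_strict_mono[of "\<bar>p\<bar>" t 2] by simp
  define r where "r = sqrt (t\<^sup>2 - p\<^sup>2)"
  have r: "r > 0" "r\<^sup>2 = t\<^sup>2 - p\<^sup>2"
    using \<open>p\<^sup>2 < t\<^sup>2\<close> by (simp_all add: r_def)
  \<comment> \<open>with \<open>sinh a = - p / r\<close> we get \<open>cosh a = t / r\<close>\<close>
  define a where "a = - arsinh (p / r)"
  have "(p / r)\<^sup>2 + 1 = (t / r)\<^sup>2"
    using r by (simp add: field_simps power_divide)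
  then have "cosh a = t / r"
    using \<open>\<bar>p\<bar> < t\<close> r by (simp add: a_def cosh_arsinh_real real_sqrt_unique)
  then have "sinh a * t + cosh a * p = 0"
    using r by (simp add: a_def field_simps)
  then have "snd (lorentz_boost a b u) \<bullet> b = 0"
    by (simp add: inner_snd_lorentz_boost[OF b b] t_def p_def)
  then show ?thesis by (rule that)
qed

lemma hyperboloid_snd_eq_0_iff: "u \<in> hyperboloid \<Longrightarrow> snd u = 0 \<longleftrightarrow> u = (1, 0)"
  by (cases u) (auto simp: hyperboloid_iff)

lemma lorentz_boosts_transitive:
  fixes G :: "(real \<times> 'a::euclidean_space \<Rightarrow> real \<times> 'a) set"
  assumes id: "id \<in> G"
    and comp_boost: "\<And>g a b. g \<in> G \<Longrightarrow> b \<in> Basis \<Longrightarrow> g \<circ> lorentz_boost a b \<in> G"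
    and x: "x \<in> hyperboloid"
  shows "\<exists>g\<in>G. g x = (1, 0)"
proof -
  \<comment> \<open>clear the coordinates of \<open>snd x\<close> one basis direction at a time\<close>
  have clear: "\<forall>x\<in>hyperboloid. (\<forall>c\<in>Basis - B. snd x \<bullet> c = 0) \<longrightarrow> (\<exists>g\<in>G. g x = (1, 0))"
    if "finite B" "B \<subseteq> Basis" for B
    using that
  proof (induction B rule: finite_subset_induct)
    case empty
    show ?case
    proof (intro ballI impI)
      fix x :: "real \<times> 'a" assume x: "x \<in> hyperboloid" and "\<forall>c\<in>Basis - {}. snd x \<bullet> c = 0"
      then have "snd x = 0"
        by (simp add: euclidean_all_zero_iff)
      then have "id x = (1, 0)"
        using hyperboloid_snd_eq_0_iff[OF x] by simp
      then show "\<exists>g\<in>G. g x = (1, 0)"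
        using id by blast
    qed
  next
    case (insert b B)
    show ?case
    proof (intro ballI impI)
      fix x assume x: "x \<in> hyperboloid" and supp: "\<forall>c\<in>Basis - insert b B. snd x \<bullet> c = 0"
      obtain a where a: "snd (lorentz_boost a b x) \<bullet> b = 0"
        using lorentz_boost_clears_coordinate[OF insert.hyps(2) x] .
      have "\<forall>c\<in>Basis - B. snd (lorentz_boost a b x) \<bullet> c = 0"
      proof
        fix c assume "c \<in> Basis - B"
        then show "snd (lorentz_boost a b x) \<bullet> c = 0"
          using a supp by (cases "c = b") (simp_all add: inner_snd_lorentz_boost insert.hyps(2))
      qed
      then obtain g where "g \<in> G" "g (lorentz_boost a b x) = (1, 0)"
        using insert.IH lorentz_boost_in_hyperboloid[OF insert.hyps(2) x] by blast
      moreover have "g \<circ> lorentz_boost a b \<in> G"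
        using comp_boost \<open>g \<in> G\<close> insert.hyps(2) by blast
      ultimately show "\<exists>g\<in>G. g x = (1, 0)"
        by (metis comp_apply)
    qed
  qed
  show ?thesis
    using clear[OF finite_Basis order_refl] x by blast
qed

section \<open>Invariance of the hyperbolic volume under boosts\<close>

lemma nn_integral_SUP_indicator:
  fixes f :: "'a \<Rightarrow> ennreal"
  assumes f: "f \<in> borel_measurable M" and I: "range I \<subseteq> sets M" "incseq I"
    and cover: "\<And>x. x \<in> space M \<Longrightarrow> \<exists>n. x \<in> I n"
  shows "(SUP n. \<integral>\<^sup>+ x. f x * indicator (I n) x \<partial>M) = (\<integral>\<^sup>+ x. f x \<partial>M)"
proof -
  have sets_I: "I n \<in> sets M" for n
    using I(1) by blast
  have "(\<Union>n. I n) = space M"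
  proof
    show "(\<Union>n. I n) \<subseteq> space M"
      using sets.sets_into_space[OF sets_I] by blast
    show "space M \<subseteq> (\<Union>n. I n)"
      using cover by blast
  qed
  have "(SUP n. \<integral>\<^sup>+ x. f x * indicator (I n) x \<partial>M) = (SUP n. emeasure (density M f) (I n))"
    by (simp add: emeasure_density[OF f sets_I])
  also have "\<dots> = emeasure (density M f) (\<Union>n. I n)"
    using I by (intro SUP_emeasure_incseq) simp_all
  also have "\<dots> = (\<integral>\<^sup>+ x. f x * indicator (space M) x \<partial>M)"
    unfolding \<open>(\<Union>n. I n) = space M\<close> by (rule emeasure_density[OF f sets.top])
  also have "\<dots> = (\<integral>\<^sup>+ x. f x \<partial>M)"
    by (intro nn_integral_cong) simp
  finally show ?thesis .
qed

lemma nn_integral_lborel_substitution: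
  fixes f :: "real \<Rightarrow> ennreal" and g g' :: "real \<Rightarrow> real"
  assumes f[measurable]: "f \<in> borel_measurable borel"
    and deriv: "\<And>t. (g has_real_derivative g' t) (at t)" and cont: "continuous_on UNIV g'"
    and nonneg: "\<And>t. g' t \<ge> 0" and "mono g" and "surj g"
  shows "(\<integral>\<^sup>+ s. f s \<partial>lborel) = (\<integral>\<^sup>+ t. f (g t) * ennreal (g' t) \<partial>lborel)"
proof -
  define I where "I n = {- real n - 1 .. real n + 1}" for n :: nat
  have "incseq I"
    by (auto simp: I_def incseq_def)
  have cover: "\<exists>n. t \<in> I n" for t
  proof -
    obtain n where "\<bar>t\<bar> \<le> real n"
      using real_arch_simple by blast
    then have "t \<in> I n"
      by (simp add: I_def abs_le_iff)
    then show ?thesis ..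
  qed
  have "continuous_on UNIV g"
    by (intro continuous_at_imp_continuous_on ballI DERIV_isCont[OF deriv])
  then have [measurable]: "g \<in> borel_measurable borel"
    by (rule borel_measurable_continuous_onI)
  have [measurable]: "g' \<in> borel_measurable borel"
    using cont by (rule borel_measurable_continuous_onI)
  have "(\<integral>\<^sup>+ s. f s \<partial>lborel) = (SUP n. \<integral>\<^sup>+ s. f s * indicator {g (- real n - 1) .. g (real n + 1)} s \<partial>lborel)"
  proof (rule nn_integral_SUP_indicator[where I="\<lambda>n. {g (- real n - 1) .. g (real n + 1)}", symmetric])
    show "incseq (\<lambda>n. {g (- real n - 1) .. g (real n + 1)})"
    proof (rule incseq_SucI)
      fix n
      have "g (- real (Suc n) - 1) \<le> g (- real n - 1)" "g (real n + 1) \<le> g (real (Suc n) + 1)"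
        using monoD[OF \<open>mono g\<close>] by simp_all
      then show "{g (- real n - 1) .. g (real n + 1)} \<subseteq> {g (- real (Suc n) - 1) .. g (real (Suc n) + 1)}"
        by auto
    qed
    show "\<exists>n. s \<in> {g (- real n - 1) .. g (real n + 1)}" for s
    proof -
      obtain t where "s = g t" using \<open>surj g\<close> by (metis surjD)
      obtain n where "t \<in> I n" using cover by blast
      then have "g (- real n - 1) \<le> g t" "g t \<le> g (real n + 1)"
        using monoD[OF \<open>mono g\<close>] by (simp_all add: I_def)
      with \<open>s = g t\<close> show ?thesis
        by auto
    qed
  qed auto
  also have "\<dots> = (SUP n. \<integral>\<^sup>+ t. f (g t) * ennreal (g' t) * indicator (I n) t \<partial>lborel)"
  proof (rule SUP_cong[OF refl])
    fix n
    show "(\<integral>\<^sup>+ s. f s * indicator {g (- real n - 1) .. g (real n + 1)} s \<partial>lborel)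
        = (\<integral>\<^sup>+ t. f (g t) * ennreal (g' t) * indicator (I n) t \<partial>lborel)"
      unfolding I_def
      by (rule nn_integral_substitution_aux[OF f _ deriv continuous_on_subset[OF cont] nonneg])
         simp_all
  qed
  also have "\<dots> = (\<integral>\<^sup>+ t. f (g t) * ennreal (g' t) \<partial>lborel)"
  proof (rule nn_integral_SUP_indicator[where I=I])
    show "(\<lambda>t. f (g t) * ennreal (g' t)) \<in> borel_measurable lborel"
      by measurable
  qed (use \<open>incseq I\<close> cover in \<open>auto simp: I_def\<close>)
  finally show ?thesis .
qed

lemma nn_integral_lborel_sinh_substitution:
  fixes K :: "real \<Rightarrow> ennreal"
  assumes K[measurable]: "K \<in> borel_measurable borel" and r: "r > 0"
  shows "(\<integral>\<^sup>+ s. ennreal (1 / sqrt (r\<^sup>2 + s\<^sup>2)) * K s \<partial>lborel) = (\<integral>\<^sup>+ t. K (r * sinh t) \<partial>lborel)"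
proof -
  have "(\<integral>\<^sup>+ s. ennreal (1 / sqrt (r\<^sup>2 + s\<^sup>2)) * K s \<partial>lborel)
      = (\<integral>\<^sup>+ t. ennreal (1 / sqrt (r\<^sup>2 + (r * sinh t)\<^sup>2)) * K (r * sinh t) * ennreal (r * cosh t) \<partial>lborel)"
  proof (rule nn_integral_lborel_substitution)
    show "((\<lambda>t. r * sinh t) has_real_derivative r * cosh t) (at t)" for t
      by (auto intro!: derivative_eq_intros)
    show "continuous_on UNIV (\<lambda>t. r * cosh t)"
      by (intro continuous_intros)
    show "0 \<le> r * cosh t" for t
      using r by simp
    show "mono (\<lambda>t. r * sinh t)"
      using r by (intro monoI) simp
    show "surj (\<lambda>t. r * sinh t)"
      by (rule surjI[of _ "\<lambda>s. arsinh (s / r)"]) (use r in simp)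
  qed measurable
  also have "\<dots> = (\<integral>\<^sup>+ t. K (r * sinh t) \<partial>lborel)"
  proof (rule nn_integral_cong)
    fix t
    have "r\<^sup>2 + (r * sinh t)\<^sup>2 = (r * cosh t)\<^sup>2"
      by (simp add: power_mult_distrib cosh_square_eq algebra_simps)
    then have "sqrt (r\<^sup>2 + (r * sinh t)\<^sup>2) = r * cosh t"
      using r by simp
    then have "ennreal (1 / sqrt (r\<^sup>2 + (r * sinh t)\<^sup>2)) * ennreal (r * cosh t) = 1"
      using r by (simp add: ennreal_mult[symmetric])
    then show "ennreal (1 / sqrt (r\<^sup>2 + (r * sinh t)\<^sup>2)) * K (r * sinh t) * ennreal (r * cosh t)
        = K (r * sinh t)"
      by (metis mult.assoc mult.commute mult_1)
  qed
  finally show ?thesis .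
qed

lemma nn_integral_lborel_split_Basis:
  fixes F :: "'a::euclidean_space \<Rightarrow> ennreal"
  assumes b: "b \<in> Basis" and F[measurable]: "F \<in> borel_measurable borel"
  shows "(\<integral>\<^sup>+ y. F y \<partial>lborel) = (\<integral>\<^sup>+ x. (\<integral>\<^sup>+ s. F ((\<Sum>c\<in>Basis-{b}. x c *\<^sub>R c) + s *\<^sub>R b) \<partial>lborel)
      \<partial>(\<Pi>\<^sub>M c\<in>Basis-{b}. lborel))"
proof -
  interpret P: product_sigma_finite "\<lambda>_::'a. lborel::real measure"
    by (simp add: product_sigma_finite_def sigma_finite_lborel)
  have meas: "(\<lambda>f. \<Sum>c\<in>Basis. f c *\<^sub>R c) \<in> measurable (\<Pi>\<^sub>M c\<in>(Basis::'a set). lborel) borel"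
    by measurable
  have basis: "Basis = insert b (Basis - {b})"
    using b by blast
  have "(\<integral>\<^sup>+ y. F y \<partial>lborel) = (\<integral>\<^sup>+ f. F (\<Sum>c\<in>Basis. f c *\<^sub>R c) \<partial>(\<Pi>\<^sub>M c\<in>Basis. lborel))"
    by (subst lborel_eq) (simp add: nn_integral_distr meas)
  also have "\<dots> = (\<integral>\<^sup>+ x. (\<integral>\<^sup>+ s. F (\<Sum>c\<in>Basis. (x(b := s)) c *\<^sub>R c) \<partial>lborel) \<partial>(\<Pi>\<^sub>M c\<in>Basis-{b}. lborel))"
    using meas by (subst basis, subst P.product_nn_integral_insert) (simp_all flip: basis)
  also have "\<dots> = (\<integral>\<^sup>+ x. (\<integral>\<^sup>+ s. F ((\<Sum>c\<in>Basis-{b}. x c *\<^sub>R c) + s *\<^sub>R b) \<partial>lborel) \<partial>(\<Pi>\<^sub>M c\<in>Basis-{b}. lborel))"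
  proof (intro nn_integral_cong)
    fix x :: "'a \<Rightarrow> real" and s :: real
    have "(\<Sum>c\<in>Basis. (x(b := s)) c *\<^sub>R c) = (x(b := s)) b *\<^sub>R b + (\<Sum>c\<in>Basis-{b}. (x(b := s)) c *\<^sub>R c)"
      by (rule sum.remove[OF finite_Basis b])
    also have "(\<Sum>c\<in>Basis-{b}. (x(b := s)) c *\<^sub>R c) = (\<Sum>c\<in>Basis-{b}. x c *\<^sub>R c)"
      by (rule sum.cong) auto
    finally show "F (\<Sum>c\<in>Basis. (x(b := s)) c *\<^sub>R c) = F ((\<Sum>c\<in>Basis-{b}. x c *\<^sub>R c) + s *\<^sub>R b)"
      by (simp add: add.commute)
  qed
  finally show ?thesis .
qed

definition hyp_chart_density :: "'a::euclidean_space \<Rightarrow> ennreal" where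
  "hyp_chart_density y = ennreal (1 / sqrt (1 + (norm y)\<^sup>2))"

lemma hyp_chart_density_measurable[measurable]: "hyp_chart_density \<in> borel_measurable borel"
  unfolding hyp_chart_density_def by measurable

lemma hyp_lift_measurable[measurable]: "hyp_lift \<in> borel_measurable borel"
  unfolding hyp_lift_def by (intro borel_measurable_continuous_onI continuous_intros)

lemma lorentz_boost_measurable[measurable]: "lorentz_boost a b \<in> borel_measurable borel"
  unfolding lorentz_boost_def by (intro borel_measurable_continuous_onI continuous_intros)

lemma sets_hyp_volume[measurable_cong]: "sets hyp_volume = sets borel"
  by (simp add: hyp_volume_def)

lemma nn_integral_hyp_volume:
  fixes h :: "real \<times> 'a::euclidean_space \<Rightarrow> ennreal"
  assumes [measurable]: "h \<in> borel_measurable borel"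
  shows "(\<integral>\<^sup>+ z. h z \<partial>hyp_volume) = (\<integral>\<^sup>+ y. hyp_chart_density y * h (hyp_lift y) \<partial>lborel)"
  unfolding hyp_volume_def
  by (simp add: nn_integral_distr nn_integral_density hyp_chart_density_def)

lemma AE_hyp_volume_hyperboloid: "AE z in hyp_volume. z \<in> hyperboloid"
proof -
  have "{u. lorentz_inner u u = -1} \<inter> {u. 0 < fst u} \<in> sets (borel :: (real \<times> 'a::euclidean_space) measure)"
    unfolding lorentz_inner_def
    by (intro sets.Int borel_closed borel_open closed_Collect_eq open_Collect_less continuous_intros)
  then have sets: "{z \<in> space borel. z \<in> hyperboloid} \<in> sets (borel :: (real \<times> 'a) measure)"
    by (simp add: hyperboloid_def Collect_conj_eq)
  have meas: "hyp_lift \<in> density lborel (\<lambda>y::'a. ennreal (1 / sqrt (1 + (norm y)\<^sup>2))) \<rightarrow>\<^sub>M borel"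
    by measurable
  show ?thesis
    unfolding hyp_volume_def AE_distr_iff[OF meas sets]
    by (simp add: hyp_lift_in_hyperboloid)
qed

definition chart_boost :: "real \<Rightarrow> 'a::euclidean_space \<Rightarrow> 'a \<Rightarrow> 'a" where
  "chart_boost a b y = snd (lorentz_boost a b (hyp_lift y))"

lemma chart_boost_measurable[measurable]: "chart_boost a b \<in> borel_measurable borel"
  unfolding chart_boost_def lorentz_boost_def hyp_lift_def
  by (intro borel_measurable_continuous_onI continuous_intros)

lemma lorentz_boost_hyp_lift:
  "b \<in> Basis \<Longrightarrow> lorentz_boost a b (hyp_lift y) = hyp_lift (chart_boost a b y)"
  unfolding chart_boost_def
  by (simp add: hyp_lift_snd lorentz_boost_in_hyperboloid hyp_lift_in_hyperboloid)

lemma nn_integral_chart_boost_line: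
  fixes k :: "'a::euclidean_space \<Rightarrow> ennreal"
  assumes b: "b \<in> Basis" and v: "v \<bullet> b = 0" and k[measurable]: "k \<in> borel_measurable borel"
  shows "(\<integral>\<^sup>+ s. hyp_chart_density (v + s *\<^sub>R b) * k (chart_boost a b (v + s *\<^sub>R b)) \<partial>lborel)
       = (\<integral>\<^sup>+ s. hyp_chart_density (v + s *\<^sub>R b) * k (v + s *\<^sub>R b) \<partial>lborel)"
proof -
  define r where "r = sqrt (1 + (norm v)\<^sup>2)"
  have r: "r > 0" "r\<^sup>2 = 1 + (norm v)\<^sup>2"
    by (simp_all add: r_def add_pos_nonneg)
  have coord: "(v + s *\<^sub>R b) \<bullet> b = s" for s
    using b v by (simp add: inner_add_left)
  have unit: "b \<bullet> b = 1" "b \<bullet> v = 0"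
    using b v by (simp_all add: inner_commute)
  then have "(norm (v + s *\<^sub>R b))\<^sup>2 = (norm v)\<^sup>2 + s\<^sup>2" for s
    unfolding power2_norm_eq_inner using v
    by (simp add: inner_add_left inner_add_right power2_eq_square[of s])
  then have density: "hyp_chart_density (v + s *\<^sub>R b) = ennreal (1 / sqrt (r\<^sup>2 + s\<^sup>2))" for s
    by (simp add: hyp_chart_density_def r(2) add.assoc)
  \<comment> \<open>in the coordinate \<open>s = r sinh t\<close> along the line the boost is the translation \<open>t \<mapsto> t + a\<close>\<close>
  have boost: "chart_boost a b (v + (r * sinh t) *\<^sub>R b) = v + (r * sinh (t + a)) *\<^sub>R b" for t
  proof -
    have "(norm (v + (r * sinh t) *\<^sub>R b))\<^sup>2 + 1 = (r * cosh t)\<^sup>2"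
      unfolding \<open>\<And>s. (norm (v + s *\<^sub>R b))\<^sup>2 = (norm v)\<^sup>2 + s\<^sup>2\<close>
      by (simp add: r(2) power_mult_distrib cosh_square_eq algebra_simps)
    then have "sqrt (1 + (norm (v + (r * sinh t) *\<^sub>R b))\<^sup>2) = r * cosh t"
      using r by (simp add: add.commute)
    then show ?thesis
      by (simp add: chart_boost_def lorentz_boost_def hyp_lift_def coord sinh_add algebra_simps v unit)
  qed
  have on_line[measurable]: "(\<lambda>s. k (v + s *\<^sub>R b)) \<in> borel_measurable borel"
    by measurable
  have "(\<lambda>t. r * sinh t) \<in> borel_measurable borel"
    by (intro borel_measurable_continuous_onI continuous_intros)
  from measurable_compose[OF this on_line]
  have on_sinh: "(\<lambda>t. k (v + (r * sinh t) *\<^sub>R b)) \<in> borel_measurable borel" .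
  have "(\<integral>\<^sup>+ s. hyp_chart_density (v + s *\<^sub>R b) * k (chart_boost a b (v + s *\<^sub>R b)) \<partial>lborel)
      = (\<integral>\<^sup>+ t. k (chart_boost a b (v + (r * sinh t) *\<^sub>R b)) \<partial>lborel)"
    unfolding density by (rule nn_integral_lborel_sinh_substitution[OF _ r(1)]) measurable
  also have "\<dots> = (\<integral>\<^sup>+ t. k (v + (r * sinh (t + a)) *\<^sub>R b) \<partial>lborel)"
    by (simp add: boost)
  also have "\<dots> = (\<integral>\<^sup>+ t. k (v + (r * sinh t) *\<^sub>R b) \<partial>lborel)"
    using nn_integral_real_affine[OF on_sinh, of 1 a] by (simp add: add.commute)
  also have "\<dots> = (\<integral>\<^sup>+ s. hyp_chart_density (v + s *\<^sub>R b) * k (v + s *\<^sub>R b) \<partial>lborel)"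
    unfolding density by (rule nn_integral_lborel_sinh_substitution[OF _ r(1), symmetric]) measurable
  finally show ?thesis .
qed

lemma nn_integral_chart_boost:
  fixes k :: "'a::euclidean_space \<Rightarrow> ennreal"
  assumes b: "b \<in> Basis" and k[measurable]: "k \<in> borel_measurable borel"
  shows "(\<integral>\<^sup>+ y. hyp_chart_density y * k (chart_boost a b y) \<partial>lborel)
       = (\<integral>\<^sup>+ y. hyp_chart_density y * k y \<partial>lborel)"
proof -
  let ?v = "\<lambda>x. \<Sum>c\<in>Basis-{b}. x c *\<^sub>R c"
  have "(\<integral>\<^sup>+ y. hyp_chart_density y * k (chart_boost a b y) \<partial>lborel)
      = (\<integral>\<^sup>+ x. (\<integral>\<^sup>+ s. hyp_chart_density (?v x + s *\<^sub>R b) * k (chart_boost a b (?v x + s *\<^sub>R b)) \<partial>lborel)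
          \<partial>(\<Pi>\<^sub>M c\<in>Basis-{b}. lborel))"
    by (rule nn_integral_lborel_split_Basis[OF b]) measurable
  also have "\<dots> = (\<integral>\<^sup>+ x. (\<integral>\<^sup>+ s. hyp_chart_density (?v x + s *\<^sub>R b) * k (?v x + s *\<^sub>R b) \<partial>lborel)
          \<partial>(\<Pi>\<^sub>M c\<in>Basis-{b}. lborel))"
  proof (rule nn_integral_cong)
    fix x :: "'a \<Rightarrow> real"
    have "?v x \<bullet> b = 0"
      using b by (simp add: inner_sum_left inner_Basis)
    then show "(\<integral>\<^sup>+ s. hyp_chart_density (?v x + s *\<^sub>R b) * k (chart_boost a b (?v x + s *\<^sub>R b)) \<partial>lborel)
        = (\<integral>\<^sup>+ s. hyp_chart_density (?v x + s *\<^sub>R b) * k (?v x + s *\<^sub>R b) \<partial>lborel)"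
      by (rule nn_integral_chart_boost_line[OF b _ k])
  qed
  also have "\<dots> = (\<integral>\<^sup>+ y. hyp_chart_density y * k y \<partial>lborel)"
    by (rule nn_integral_lborel_split_Basis[OF b, symmetric]) measurable
  finally show ?thesis .
qed

lemma nn_integral_hyp_volume_lorentz_boost:
  fixes h :: "real \<times> 'a::euclidean_space \<Rightarrow> ennreal"
  assumes b: "b \<in> Basis" and h[measurable]: "h \<in> borel_measurable borel"
  shows "(\<integral>\<^sup>+ z. h (lorentz_boost a b z) \<partial>hyp_volume) = (\<integral>\<^sup>+ z. h z \<partial>hyp_volume)"
proof -
  have "(\<integral>\<^sup>+ z. h (lorentz_boost a b z) \<partial>hyp_volume)
      = (\<integral>\<^sup>+ y. hyp_chart_density y * (h \<circ> hyp_lift) (chart_boost a b y) \<partial>lborel)"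
    by (simp add: nn_integral_hyp_volume lorentz_boost_hyp_lift[OF b])
  also have "\<dots> = (\<integral>\<^sup>+ y. hyp_chart_density y * (h \<circ> hyp_lift) y \<partial>lborel)"
    by (rule nn_integral_chart_boost[OF b]) measurable
  also have "\<dots> = (\<integral>\<^sup>+ z. h z \<partial>hyp_volume)"
    by (simp add: nn_integral_hyp_volume)
  finally show ?thesis .
qed

section \<open>Hyperbolic motions and the triangle inequality\<close>

definition hyp_motion :: "(real \<times> 'a::euclidean_space \<Rightarrow> real \<times> 'a) \<Rightarrow> bool" where
  "hyp_motion g \<longleftrightarrow> (\<forall>u v. lorentz_inner (g u) (g v) = lorentz_inner u v) \<and>
     g ` hyperboloid \<subseteq> hyperboloid \<and> g \<in> borel_measurable borel \<and>
     (\<forall>h. h \<in> borel_measurable borel \<longrightarrow>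
        (\<integral>\<^sup>+ z. h (g z) \<partial>hyp_volume) = (\<integral>\<^sup>+ z. h z \<partial>hyp_volume))"

lemma hyp_motion_lorentz_inner: "hyp_motion g \<Longrightarrow> lorentz_inner (g u) (g v) = lorentz_inner u v"
  unfolding hyp_motion_def by blast

lemma hyp_motion_in_hyperboloid: "hyp_motion g \<Longrightarrow> u \<in> hyperboloid \<Longrightarrow> g u \<in> hyperboloid"
  unfolding hyp_motion_def by blast

lemma nn_integral_hyp_motion:
  "hyp_motion g \<Longrightarrow> h \<in> borel_measurable borel \<Longrightarrow>
    (\<integral>\<^sup>+ z. h (g z) \<partial>hyp_volume) = (\<integral>\<^sup>+ z. h z \<partial>hyp_volume)"
  unfolding hyp_motion_def by blast

lemma hyp_motion_id: "hyp_motion id"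
  by (simp add: hyp_motion_def)

lemma hyp_motion_comp_lorentz_boost:
  assumes g: "hyp_motion g" and b: "b \<in> Basis"
  shows "hyp_motion (g \<circ> lorentz_boost a b)"
proof -
  have [measurable]: "g \<in> borel_measurable borel"
    using g unfolding hyp_motion_def by blast
  have "(\<integral>\<^sup>+ z. h (g (lorentz_boost a b z)) \<partial>hyp_volume) = (\<integral>\<^sup>+ z. h z \<partial>hyp_volume)"
    if [measurable]: "h \<in> borel_measurable borel" for h :: "real \<times> 'a \<Rightarrow> ennreal"
  proof -
    have "(\<integral>\<^sup>+ z. h (g (lorentz_boost a b z)) \<partial>hyp_volume) = (\<integral>\<^sup>+ z. h (g z) \<partial>hyp_volume)"
      using nn_integral_hyp_volume_lorentz_boost[OF b, of "h \<circ> g"] by simp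
    also have "\<dots> = (\<integral>\<^sup>+ z. h z \<partial>hyp_volume)"
      by (rule nn_integral_hyp_motion[OF g]) measurable
    finally show ?thesis .
  qed
  with g b show ?thesis
    unfolding hyp_motion_def[of "g \<circ> lorentz_boost a b"]
    by (auto simp: hyp_motion_lorentz_inner lorentz_inner_lorentz_boost
        hyp_motion_in_hyperboloid lorentz_boost_in_hyperboloid)
qed

lemma hyp_motion_to_origin:
  assumes "x \<in> hyperboloid"
  obtains g where "hyp_motion g" and "g x = (1, 0)"
  using lorentz_boosts_transitive[of "Collect hyp_motion" x] assms
    hyp_motion_id hyp_motion_comp_lorentz_boost by auto

lemma hyp_dist_hyp_motion: "hyp_motion g \<Longrightarrow> hyp_dist (g u) (g v) = hyp_dist u v"
  by (simp add: hyp_dist_def hyp_motion_lorentz_inner)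

lemma neg_lorentz_inner_ge_1:
  assumes u: "u \<in> hyperboloid" and v: "v \<in> hyperboloid"
  shows "- lorentz_inner u v \<ge> 1"
proof -
  obtain g where g: "hyp_motion g" "g v = (1, 0)"
    using hyp_motion_to_origin[OF v] .
  then have "g u \<in> hyperboloid"
    using u by (simp add: hyp_motion_in_hyperboloid)
  then have "- lorentz_inner (g u) (g v) \<ge> 1"
    using g(2) by (simp add: lorentz_inner_origin hyperboloid_fst_ge_1)
  then show ?thesis
    using g(1) by (simp add: hyp_motion_lorentz_inner)
qed

lemma hyp_dist_triangle_origin:
  assumes u: "u \<in> hyperboloid" and w: "w \<in> hyperboloid"
  shows "hyp_dist u w \<le> hyp_dist u (1, 0) + hyp_dist (1, 0) w"
proof -
  define s t where "s = fst u" and "t = fst w"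
  have "s \<ge> 1" "t \<ge> 1"
    using hyperboloid_fst_ge_1[OF u] hyperboloid_fst_ge_1[OF w] by (simp_all add: s_def t_def)
  have "norm (snd u) = sqrt (s\<^sup>2 - 1)" "norm (snd w) = sqrt (t\<^sup>2 - 1)"
    using u w by (simp_all add: hyperboloid_iff s_def t_def)
  have "- lorentz_inner u w = s * t - snd u \<bullet> snd w"
    by (simp add: lorentz_inner_def s_def t_def)
  also have "\<dots> \<le> s * t + norm (snd u) * norm (snd w)"
    using norm_cauchy_schwarz[of "- snd u" "snd w"] by simp
  also have "\<dots> = cosh (arcosh s + arcosh t)"
    using \<open>s \<ge> 1\<close> \<open>t \<ge> 1\<close> \<open>norm (snd u) = _\<close> \<open>norm (snd w) = _\<close>
    by (simp add: cosh_add sinh_arcosh_real)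
  finally have "arcosh (- lorentz_inner u w) \<le> arcosh s + arcosh t"
    using neg_lorentz_inner_ge_1[OF u w] \<open>s \<ge> 1\<close> \<open>t \<ge> 1\<close>
    by (metis arcosh_cosh_real arcosh_less_iff_real arcosh_nonneg_real add_nonneg_nonneg
        cosh_real_ge_1 not_less)
  then show ?thesis
    by (simp add: hyp_dist_def lorentz_inner_origin lorentz_inner_commute[of "(1, 0)"] s_def t_def)
qed

lemma hyp_dist_triangle:
  assumes "u \<in> hyperboloid" and "v \<in> hyperboloid" and "w \<in> hyperboloid"
  shows "hyp_dist u w \<le> hyp_dist u v + hyp_dist v w"
proof -
  obtain g where g: "hyp_motion g" "g v = (1, 0)"
    using hyp_motion_to_origin[OF \<open>v \<in> hyperboloid\<close>] .
  have "g u \<in> hyperboloid" "g w \<in> hyperboloid"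
    using g(1) assms by (simp_all add: hyp_motion_in_hyperboloid)
  from hyp_dist_triangle_origin[OF this]
  have "hyp_dist (g u) (g w) \<le> hyp_dist (g u) (g v) + hyp_dist (g v) (g w)"
    using g(2) by simp
  then show ?thesis
    by (simp add: hyp_dist_hyp_motion[OF g(1)])
qed

section \<open>The mechanism\<close>

lemma exp_neg_hyp_dist_le:
  assumes "z \<in> hyperboloid" "x \<in> hyperboloid" "x' \<in> hyperboloid" and "eps \<ge> 0"
  shows "exp (- eps * hyp_dist z x) \<le> exp (eps * hyp_dist x x') * exp (- eps * hyp_dist z x')"
proof -
  have "hyp_dist z x' \<le> hyp_dist z x + hyp_dist x x'"
    using hyp_dist_triangle assms(1-3) by blast
  from mult_left_mono[OF this \<open>eps \<ge> 0\<close>]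
  have "- eps * hyp_dist z x \<le> eps * hyp_dist x x' + - eps * hyp_dist z x'"
    by (simp add: algebra_simps)
  then show ?thesis
    by (simp flip: exp_add)
qed

lemma hyp_dist_measurable[measurable]: "(\<lambda>z. hyp_dist z p) \<in> borel_measurable borel"
proof -
  have "(\<lambda>z. - lorentz_inner z p) \<in> borel_measurable borel"
    unfolding lorentz_inner_def by (intro borel_measurable_continuous_onI continuous_intros)
  moreover have "(arcosh :: real \<Rightarrow> real) \<in> borel_measurable borel"
    unfolding arcosh_def[abs_def] by simp
  ultimately show ?thesis
    unfolding hyp_dist_def by (rule measurable_compose)
qed

lemma hyp_laplace_norm_hyp_motion:
  assumes "hyp_motion g"
  shows "hyp_laplace_norm eps (g x) = hyp_laplace_norm eps x"
proof -
  have "hyp_laplace_norm eps (g x) = (\<integral>\<^sup>+ z. ennreal (exp (- eps * hyp_dist (g z) (g x))) \<partial>hyp_volume)"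
    unfolding hyp_laplace_norm_def by (rule nn_integral_hyp_motion[OF assms, symmetric]) measurable
  then show ?thesis
    by (simp add: hyp_laplace_norm_def hyp_dist_hyp_motion[OF assms])
qed

lemma hyp_laplace_norm_eq:
  fixes x x' :: "real \<times> 'a::euclidean_space"
  assumes "x \<in> hyperboloid" "x' \<in> hyperboloid"
  shows "hyp_laplace_norm eps x = hyp_laplace_norm eps x'"
proof -
  obtain g where g: "hyp_motion g" "g x = (1, 0)"
    using hyp_motion_to_origin[OF assms(1)] .
  obtain g' where g': "hyp_motion g'" "g' x' = (1, 0)"
    using hyp_motion_to_origin[OF assms(2)] .
  have "hyp_laplace_norm eps x = hyp_laplace_norm eps (1, 0 :: 'a)"
    using hyp_laplace_norm_hyp_motion[OF g(1), of eps x] by (simp add: g(2))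
  also have "\<dots> = hyp_laplace_norm eps x'"
    using hyp_laplace_norm_hyp_motion[OF g'(1), of eps x'] by (simp add: g'(2))
  finally show ?thesis .
qed

lemma hyp_laplace_norm_neq_0: "hyp_laplace_norm eps x \<noteq> 0"
proof
  assume "hyp_laplace_norm eps x = 0"
  then have "AE y in lborel. hyp_chart_density y * ennreal (exp (- eps * hyp_dist (hyp_lift y) x)) = 0"
    unfolding hyp_laplace_norm_def by (simp add: nn_integral_hyp_volume nn_integral_0_iff_AE)
  then have "AE y in lborel. y \<notin> (UNIV :: 'a set)"
  proof eventually_elim
    case (elim y)
    have "1 + (norm y)\<^sup>2 > 0"
      by (simp add: add_pos_nonneg)
    with elim show ?case
      by (simp add: hyp_chart_density_def)
  qed
  then have "UNIV \<in> null_sets (lborel :: 'a measure)"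
    by (subst AE_iff_null_sets) auto
  then show False
    using null_setsD1 by fastforce
qed

lemma space_hyp_laplace: "space (hyp_laplace eps x) = UNIV"
  by (simp add: hyp_laplace_def hyp_volume_def)

lemma prob_space_hyp_laplace:
  assumes "hyp_laplace_norm eps x < \<infinity>"
  shows "prob_space (hyp_laplace eps x)"
proof
  have "emeasure (hyp_laplace eps x) (space (hyp_laplace eps x))
      = (\<integral>\<^sup>+ z. ennreal (exp (- eps * hyp_dist z x)) / hyp_laplace_norm eps x \<partial>hyp_volume)"
    unfolding hyp_laplace_def by (simp add: emeasure_density)
  also have "\<dots> = hyp_laplace_norm eps x / hyp_laplace_norm eps x"
    unfolding hyp_laplace_norm_def by (rule nn_integral_divide) measurable
  also have "\<dots> = 1"
    using assms hyp_laplace_norm_neq_0[of eps x] by simp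
  finally show "emeasure (hyp_laplace eps x) (space (hyp_laplace eps x)) = 1" .
qed

lemma emeasure_hyp_laplace_le:
  assumes x: "x \<in> hyperboloid" and x': "x' \<in> hyperboloid" and "eps \<ge> 0"
    and A[measurable]: "A \<in> sets borel"
  shows "emeasure (hyp_laplace eps x) A
    \<le> ennreal (exp (eps * hyp_dist x x')) * emeasure (hyp_laplace eps x') A"
proof -
  define N where "N = hyp_laplace_norm eps x"
  define E where "E = ennreal (exp (eps * hyp_dist x x'))"
  have N': "hyp_laplace_norm eps x' = N"
    using hyp_laplace_norm_eq[OF x' x] by (simp add: N_def)
  have "emeasure (hyp_laplace eps x) A
      = (\<integral>\<^sup>+ z. ennreal (exp (- eps * hyp_dist z x)) / N * indicator A z \<partial>hyp_volume)"
    unfolding hyp_laplace_def N_def by (rule emeasure_density) measurable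
  also have "\<dots> \<le> (\<integral>\<^sup>+ z. E * (ennreal (exp (- eps * hyp_dist z x')) / N * indicator A z) \<partial>hyp_volume)"
  proof (rule nn_integral_mono_AE)
    show "AE z in hyp_volume. ennreal (exp (- eps * hyp_dist z x)) / N * indicator A z
        \<le> E * (ennreal (exp (- eps * hyp_dist z x')) / N * indicator A z)"
      using AE_hyp_volume_hyperboloid
    proof eventually_elim
      case (elim z)
      have "ennreal (exp (- eps * hyp_dist z x)) \<le> E * ennreal (exp (- eps * hyp_dist z x'))"
        using exp_neg_hyp_dist_le[OF elim x x' \<open>eps \<ge> 0\<close>]
        by (simp add: E_def ennreal_mult[symmetric] ennreal_leI)
      then have "ennreal (exp (- eps * hyp_dist z x)) / N \<le> E * (ennreal (exp (- eps * hyp_dist z x')) / N)"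
        by (metis divide_right_mono_ennreal ennreal_times_divide)
      then show ?case
        by (cases "z \<in> A") simp_all
    qed
  qed
  also have "\<dots> = E * emeasure (hyp_laplace eps x') A"
    unfolding hyp_laplace_def N'[symmetric]
    by (simp add: emeasure_density nn_integral_cmult)
  finally show ?thesis
    unfolding E_def .
qed

lemma measure_hyp_laplace_le:
  assumes "x \<in> hyperboloid" "x' \<in> hyperboloid" "eps \<ge> 0"
    and finite: "hyp_laplace_norm eps x' < \<infinity>"
  shows "measure (hyp_laplace eps x) A \<le> exp (eps * hyp_dist x x') * measure (hyp_laplace eps x') A"
proof (cases "A \<in> sets borel")
  case True
  interpret prob_space "hyp_laplace eps x'"
    using prob_space_hyp_laplace[OF finite] .
  have "measure (hyp_laplace eps x) A
      \<le> enn2real (ennreal (exp (eps * hyp_dist x x')) * emeasure (hyp_laplace eps x') A)"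
    unfolding measure_def using emeasure_hyp_laplace_le[OF assms(1-3) True]
    by (rule enn2real_mono) (simp add: ennreal_mult_eq_top_iff less_top[symmetric])
  then show ?thesis
    by (simp add: enn2real_mult measure_def)
next
  case False
  then show ?thesis
    by (simp add: hyp_laplace_def hyp_volume_def measure_notin_sets)
qed

theorem mainTheorem1:
  fixes W :: "'w::linorder set"
    and \<phi> :: "'w \<Rightarrow> real \<times> 'a::euclidean_space"
    and \<epsilon> :: real
  assumes "finite W"
    and "\<forall>u \<in> W. \<phi> u \<in> hyperboloid"
    and "\<epsilon> > 0"
    and "\<forall>x \<in> (hyperboloid :: (real \<times> 'a) set).
           (\<integral>\<^sup>+ z. ennreal (exp (- \<epsilon> * hyp_dist z x)) \<partial>hyp_volume) < \<infinity>"
    and "w \<in> W" and "w' \<in> W" and "w_hat \<in> W"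
  shows "mech_prob \<epsilon> W \<phi> w w_hat
           \<le> exp (\<epsilon> * hyp_dist (\<phi> w) (\<phi> w')) * mech_prob \<epsilon> W \<phi> w' w_hat"
proof -
  have x: "\<phi> w \<in> hyperboloid" and x': "\<phi> w' \<in> hyperboloid"
    using assms(2,5,6) by auto
  have "hyp_laplace_norm \<epsilon> (\<phi> w') < \<infinity>"
    using assms(4) x' by (simp add: hyp_laplace_norm_def)
  \<comment> \<open>the bound holds for every event\<close>
  from measure_hyp_laplace_le[OF x x' less_imp_le[OF \<open>\<epsilon> > 0\<close>] this]
  show ?thesis
    unfolding mech_prob_def space_hyp_laplace .
qed

end
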